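(* Let $m\ge3$ be an integer and $p>m$ a prime not dividing $m$, and let $D=\{1,2,\dots,m-1\}\cup\{p^n:n\in\mathbb{N}\}$. Then $\chi(\mathbb{N}_D)=m$ and $\operatorname{doa}(D)=1$, so $\chi(\mathbb{N}_D)/\operatorname{doa}(D)=m$.
   Context: For $D\subseteq\mathbb{N}$, $\mathbb{N}_D$ is the graph with vertex set $\mathbb{N}$ in which $x,y$ are adjacent iff $|x-y|\in D$; $\chi(\mathbb{N}_D)$ is its chromatic number. A $k$-term $D$-diffsequence is a sequence of integers $x_1,\dots,x_k$ with $x_{i+1}-x_i\in D$ for all $i$; $D$ is $r$-accessible if every $r$-coloring of $\mathbb{N}$ admits monochromatic $k$-term $D$-diffsequences for all $k$, and $\operatorname{doa}(D)$ is the greatest $r$ for which $D$ is $r$-accessible. *)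

theory Defs
  imports "HOL-Computational_Algebra.Primes" "HOL-Library.Extended_Nat"
begin

text \<open>Here \<open>\<nat>\<close> is the set of positive integers; colourings are functions on nat,
  only their values on positive integers matter.\<close>

definition proper_coloring :: "nat set \<Rightarrow> nat \<Rightarrow> (nat \<Rightarrow> nat) \<Rightarrow> bool" where
  "proper_coloring D r c \<longleftrightarrow>
     (\<forall>x\<ge>1. c x < r) \<and>
     (\<forall>x\<ge>1. \<forall>y\<ge>1. nat \<bar>int x - int y\<bar> \<in> D \<longrightarrow> c x \<noteq> c y)"

text \<open>Chromatic number of \<open>\<nat>_D\<close> (infinite if no finite colouring exists).\<close>
definition chi_ND :: "nat set \<Rightarrow> enat" where
  "chi_ND D = (INF r \<in> {r. \<exists>c. proper_coloring D r c}. enat r)"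

definition mono_diffseq :: "nat set \<Rightarrow> (nat \<Rightarrow> nat) \<Rightarrow> nat \<Rightarrow> (nat \<Rightarrow> nat) \<Rightarrow> bool" where
  "mono_diffseq D c k x \<longleftrightarrow>
     (\<forall>i<k. x i \<ge> 1) \<and>
     (\<forall>i. Suc i < k \<longrightarrow> int (x (Suc i)) - int (x i) \<in> int ` D) \<and>
     (\<forall>i<k. \<forall>j<k. c (x i) = c (x j))"

definition r_accessible :: "nat set \<Rightarrow> nat \<Rightarrow> bool" where
  "r_accessible D r \<longleftrightarrow>
     (\<forall>c. (\<forall>x\<ge>1. c x < r) \<longrightarrow> (\<forall>k. \<exists>x. mono_diffseq D c k x))"

text \<open>Degree of accessibility: the greatest r with D r-accessible (infinite if unbounded).\<close>
definition doa :: "nat set \<Rightarrow> enat" where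
  "doa D = (SUP r \<in> {r. r_accessible D r}. enat r)"

end

theory Submission
  imports Defs
begin

text \<open>The integers \<open>1, \<dots>, m\<close> pairwise differ by elements of \<open>{1..m-1} \<subseteq> D\<close>, so they form a
  clique and \<open>\<chi> \<ge> m\<close>; colouring by residues mod \<open>m\<close> is proper because no element of \<open>D\<close>
  is a multiple of \<open>m\<close> (here \<open>p \<nmid> m\<close> and \<open>p\<close> prime make \<open>p\<^sup>n\<close> coprime to \<open>m\<close>).
  For the degree of accessibility, colour \<open>x\<close> by the parity of \<open>\<lfloor>x/p\<rfloor>\<close>. A step \<open>d < p\<close>
  moves to the same or the next block, and a step \<open>p\<^sup>n\<close> moves by an odd number of blocks;
  so a monochromatic step never leaves its block of length \<open>p\<close>, and a monochromatic
  diffsequence has at most \<open>p\<close> terms.\<close>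

lemma chi_ND_eqI:
  assumes "proper_coloring D r c" and "\<And>r' c'. proper_coloring D r' c' \<Longrightarrow> r \<le> r'"
  shows "chi_ND D = enat r"
  unfolding chi_ND_def
proof (rule antisym)
  show "(INF r \<in> {r. \<exists>c. proper_coloring D r c}. enat r) \<le> enat r"
    using assms(1) by (blast intro: INF_lower2)
  show "enat r \<le> (INF r \<in> {r. \<exists>c. proper_coloring D r c}. enat r)"
    using assms(2) by (auto intro!: INF_greatest)
qed

lemma doa_eqI:
  assumes "r_accessible D r" and "\<And>r'. r_accessible D r' \<Longrightarrow> r' \<le> r"
  shows "doa D = enat r"
  unfolding doa_def
proof (rule antisym)
  show "(SUP r \<in> {r. r_accessible D r}. enat r) \<le> enat r"
    using assms(2) by (auto intro!: SUP_least)
  show "enat r \<le> (SUP r \<in> {r. r_accessible D r}. enat r)"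
    using assms(1) by (blast intro: SUP_upper2)
qed

lemma proper_coloring_ge_of_interval_subset:
  assumes "{1..m-1} \<subseteq> D" and "proper_coloring D r c"
  shows "m \<le> r"
proof -
  have "inj_on c {1..m}"
  proof (rule inj_onI, rule ccontr)
    fix x y assume x: "x \<in> {1..m}" and y: "y \<in> {1..m}" and "c x = c y" and "x \<noteq> y"
    then have "nat \<bar>int x - int y\<bar> \<in> {1..m-1}" using x y by auto
    with assms(1) have "nat \<bar>int x - int y\<bar> \<in> D" by blast
    then show False
      using assms(2) x y \<open>c x = c y\<close> unfolding proper_coloring_def by auto
  qed
  moreover have "c ` {1..m} \<subseteq> {..<r}"
    using assms(2) unfolding proper_coloring_def by auto
  ultimately have "card {1..m} \<le> card {..<r}"
    by (metis card_inj_on_le finite_lessThan)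
  then show ?thesis by simp
qed

lemma proper_coloring_mod:
  assumes "m > 0" and "\<And>d. d \<in> D \<Longrightarrow> \<not> m dvd d"
  shows "proper_coloring D m (\<lambda>x. x mod m)"
  unfolding proper_coloring_def
proof (intro conjI allI impI)
  fix x :: nat show "x mod m < m" using assms(1) by simp
next
  fix x y :: nat assume "nat \<bar>int x - int y\<bar> \<in> D"
  then have "\<not> m dvd nat \<bar>int x - int y\<bar>" by (rule assms(2))
  then show "x mod m \<noteq> y mod m"
    by (cases "x \<le> y") (auto simp: mod_eq_dvd_iff_nat[symmetric] nat_diff_distrib)
qed

lemma r_accessible_one:
  assumes "d \<in> D"
  shows "r_accessible D 1"
  unfolding r_accessible_def
proof (intro allI impI)
  fix c :: "nat \<Rightarrow> nat" and k assume "\<forall>x\<ge>1. c x < 1"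
  then have "mono_diffseq D c k (\<lambda>i. 1 + i * d)"
    using assms unfolding mono_diffseq_def by auto
  then show "\<exists>x. mono_diffseq D c k x" by blast
qed

lemma same_block_of_same_block_parity:
  fixes p x d :: nat
  assumes "d < p \<or> (p dvd d \<and> odd (d div p))"
    and "(x + d) div p mod 2 = x div p mod 2"
  shows "(x + d) div p = x div p"
  using assms(1)
proof
  assume "d < p"
  moreover have "x mod p < p" using \<open>d < p\<close> by simp
  moreover have "p * (x div p) + x mod p = x" by (rule mult_div_mod_eq)
  ultimately have "x + d < p * (x div p) + 2 * p" by linarith
  then have "x + d < (x div p + 2) * p" by (simp add: algebra_simps)
  then have "(x + d) div p \<le> Suc (x div p)"
    by (simp add: less_mult_imp_div_less less_Suc_eq_le[symmetric])
  moreover have "x div p \<le> (x + d) div p" by (simp add: div_le_mono)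
  moreover have "Suc a mod 2 \<noteq> a mod 2" for a :: nat by presburger
  ultimately show ?thesis using assms(2) by (metis le_Suc_eq le_antisym)
next
  assume "p dvd d \<and> odd (d div p)"
  then have "(x + d) div p = x div p + d div p" by auto
  moreover have "(a + b) mod 2 \<noteq> a mod 2" if "odd b" for a b :: nat
    using that by presburger
  ultimately show ?thesis using assms(2) \<open>p dvd d \<and> odd (d div p)\<close> by metis
qed

lemma r_accessible_le_one_of_block_steps:
  fixes p r :: nat
  assumes "p > 0"
    and steps: "\<And>d. d \<in> D \<Longrightarrow> 0 < d \<and> (d < p \<or> (p dvd d \<and> odd (d div p)))"
    and "r_accessible D r"
  shows "r \<le> 1"
proof (rule ccontr)
  define c where "c x = x div p mod 2" for x
  assume "\<not> r \<le> 1"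
  then have "c x < r" for x by (simp add: c_def less_le_trans)
  then obtain x where x: "mono_diffseq D c (Suc p) x"
    using assms(3) unfolding r_accessible_def by blast
  have step: "x (Suc i) div p = x i div p \<and> x i < x (Suc i)" if "i < p" for i
  proof -
    have "int (x (Suc i)) - int (x i) \<in> int ` D"
      using x that unfolding mono_diffseq_def by blast
    then obtain d where "d \<in> D" and "x (Suc i) = x i + d" by force
    moreover have "c (x (Suc i)) = c (x i)"
      using x that unfolding mono_diffseq_def by auto
    ultimately show ?thesis
      using steps same_block_of_same_block_parity[of d p "x i"] by (auto simp: c_def)
  qed
  have "x i div p = x 0 div p \<and> x 0 + i \<le> x i" if "i \<le> p" for i
    using that
  proof (induction i)
    case (Suc i)
    then show ?case using step[of i] by auto
  qed simp
  from this[of p] have "x p div p = x 0 div p" and "x 0 + p \<le> x p" by simp_all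
  moreover have "(x 0 + p) div p = Suc (x 0 div p)" using assms(1) by simp
  ultimately show False using div_le_mono[of "x 0 + p" "x p" p] by simp
qed

lemma not_dvd_of_mem_interval_prime_powers:
  fixes m p d :: nat
  assumes "m \<ge> 2" and "prime p" and "\<not> p dvd m"
    and "d \<in> {1..m-1} \<union> {p ^ n | n. n \<ge> 1}"
  shows "\<not> m dvd d"
proof
  assume "m dvd d"
  show False
  proof (cases "d \<in> {1..m-1}")
    case True
    with \<open>m dvd d\<close> show False by (auto dest: dvd_imp_le)
  next
    case False
    then obtain n where "d = p ^ n" using assms(4) by blast
    moreover have "coprime m p" using assms(2,3) by (metis prime_imp_coprime coprime_commute)
    ultimately have "coprime m d" by simp
    with \<open>m dvd d\<close> have "is_unit m" by (simp add: coprime_absorb_left)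
    with assms(1) show False by simp
  qed
qed

lemma block_step_of_mem_interval_prime_powers:
  fixes m p d :: nat
  assumes "odd p" and "m \<le> p" and "d \<in> {1..m-1} \<union> {p ^ n | n. n \<ge> 1}"
  shows "0 < d \<and> (d < p \<or> (p dvd d \<and> odd (d div p)))"
proof (cases "d \<in> {1..m-1}")
  case True
  then show ?thesis using assms(2) by auto
next
  case False
  then obtain k where "d = p ^ k" and "k \<ge> 1" using assms(3) by blast
  then obtain n where "d = p ^ Suc n" by (cases k) auto
  then show ?thesis using \<open>odd p\<close> by (simp add: odd_pos)
qed

theorem mainTheorem14:
  fixes m p :: nat
  assumes "m \<ge> 3" and "prime p" and "p > m" and "\<not> p dvd m"
  shows "chi_ND ({1..m-1} \<union> {p ^ n | n. n \<ge> 1}) = enat m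
       \<and> doa ({1..m-1} \<union> {p ^ n | n. n \<ge> 1}) = 1"
proof
  let ?D = "{1..m-1} \<union> {p ^ n | n. n \<ge> 1}"
  show "chi_ND ?D = enat m"
  proof (rule chi_ND_eqI)
    show "proper_coloring ?D m (\<lambda>x. x mod m)"
      using assms not_dvd_of_mem_interval_prime_powers[of m p]
      by (intro proper_coloring_mod) auto
    show "m \<le> r" if "proper_coloring ?D r c" for r c
      using that by (rule proper_coloring_ge_of_interval_subset[rotated]) auto
  qed
  have "odd p" using assms(1-3) by (simp add: prime_odd_nat)
  show "doa ?D = 1"
    unfolding one_enat_def
  proof (rule doa_eqI)
    show "r_accessible ?D 1" using assms(1) by (intro r_accessible_one[of 1]) auto
    show "r \<le> 1" if "r_accessible ?D r" for r
      using odd_pos[OF \<open>odd p\<close>]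
        block_step_of_mem_interval_prime_powers[OF \<open>odd p\<close> less_imp_le[OF assms(3)]] that
      by (rule r_accessible_le_one_of_block_steps)
  qed
qed

end
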